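(* Let $\Gamma$ be a finite connected graph, $\Sigma$ a motif in $\Gamma$ with vertices $p_1,\dots,p_m$, and $n_i$ the degree of vertex $i$ in $\Gamma$. Suppose $f$ is a real function on the vertices of $\Sigma$, not identically zero, and $\lambda\in\mathbb{R}$ are such that $$\frac{1}{n_i}\sum_{j\in\Sigma,\ j\sim i} f(j)=(1-\lambda)f(i)\quad\text{for all } i\in\Sigma.$$ Let $\Gamma^\Sigma$ be the graph obtained from $\Gamma$ by adding new vertices $q_1,\dots,q_m$, joining $q_\alpha$ and $q_\beta$ whenever $p_\alpha\sim p_\beta$, and joining each $q_\alpha$ to every vertex $p\notin\Sigma$ that is a neighbor of $p_\alpha$ in $\Gamma$. Then $\lambda$ is an eigenvalue of the normalized Laplacian of $\Gamma^\Sigma$, with an eigenfunction that equals $f(p_\alpha)$ at $p_\alpha$, equals $-f(p_\alpha)$ at $q_\alpha$ for each $\alpha$, and is $0$ at all other vertices.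
   Context: For a finite simple graph without isolated vertices, write $i\sim j$ for adjacency and $n_i$ for the degree of $i$. The normalized Laplacian acts on real functions $v$ on the vertices by $\Delta v(i)=v(i)-\frac{1}{n_i}\sum_{j\sim i}v(j)$; $\lambda$ is an eigenvalue with eigenfunction $u$ if $u\not\equiv 0$ and $\frac{1}{n_i}\sum_{j\sim i}u(j)=(1-\lambda)u(i)$ for all $i$. A motif in $\Gamma$ is a connected subgraph containing all edges of $\Gamma$ between its vertices. *)

theory Defs
  imports Complex_Main
begin

text \<open>A finite simple graph: finite vertex set V, symmetric irreflexive adjacency E
  (only adjacencies between vertices of V are relevant).\<close>
definition simple_graph :: "'a set \<Rightarrow> ('a \<Rightarrow> 'a \<Rightarrow> bool) \<Rightarrow> bool" where
  "simple_graph V E \<longleftrightarrow> finite V \<and> (\<forall>x y. E x y \<longrightarrow> E y x) \<and> (\<forall>x. \<not> E x x)"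

definition neighbors :: "'a set \<Rightarrow> ('a \<Rightarrow> 'a \<Rightarrow> bool) \<Rightarrow> 'a \<Rightarrow> 'a set" where
  "neighbors V E i = {j \<in> V. E i j}"

definition degree :: "'a set \<Rightarrow> ('a \<Rightarrow> 'a \<Rightarrow> bool) \<Rightarrow> 'a \<Rightarrow> nat" where
  "degree V E i = card (neighbors V E i)"

definition no_isolated :: "'a set \<Rightarrow> ('a \<Rightarrow> 'a \<Rightarrow> bool) \<Rightarrow> bool" where
  "no_isolated V E \<longleftrightarrow> (\<forall>i\<in>V. \<exists>j\<in>V. E i j)"

definition connected_graph :: "'a set \<Rightarrow> ('a \<Rightarrow> 'a \<Rightarrow> bool) \<Rightarrow> bool" where
  "connected_graph V E \<longleftrightarrow> V \<noteq> {} \<and>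
     (\<forall>x\<in>V. \<forall>y\<in>V. (\<lambda>a b. a \<in> V \<and> b \<in> V \<and> E a b)\<^sup>*\<^sup>* x y)"

text \<open>A motif: a connected induced subgraph (induced: it contains all edges of the graph
  between its vertices, which is automatic since adjacency is inherited from E).\<close>
definition motif :: "'a set \<Rightarrow> ('a \<Rightarrow> 'a \<Rightarrow> bool) \<Rightarrow> 'a set \<Rightarrow> bool" where
  "motif V E S \<longleftrightarrow> S \<subseteq> V \<and> connected_graph S E"

text \<open>Eigenfunction / eigenvalue of the normalized Laplacian
  \<open>\<Delta> v(i) = v(i) - (1/n_i) \<Sum>_{j\<sim>i} v(j)\<close>.\<close>
definition nl_eigenfunction :: "'a set \<Rightarrow> ('a \<Rightarrow> 'a \<Rightarrow> bool) \<Rightarrow> real \<Rightarrow> ('a \<Rightarrow> real) \<Rightarrow> bool" where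
  "nl_eigenfunction V E lam u \<longleftrightarrow> (\<exists>i\<in>V. u i \<noteq> 0) \<and>
     (\<forall>i\<in>V. (1 / real (degree V E i)) * (\<Sum>j\<in>neighbors V E i. u j) = (1 - lam) * u i)"

definition nl_eigenvalue :: "'a set \<Rightarrow> ('a \<Rightarrow> 'a \<Rightarrow> bool) \<Rightarrow> real \<Rightarrow> bool" where
  "nl_eigenvalue V E lam \<longleftrightarrow> (\<exists>u. nl_eigenfunction V E lam u)"

text \<open>The graph \<open>\<Gamma>^\<Sigma>\<close>: original vertices are \<open>Inl p\<close>, the new copy \<open>q_\<alpha>\<close> of
  \<open>p_\<alpha> \<in> \<Sigma>\<close> is \<open>Inr p_\<alpha>\<close>.\<close>
definition dup_vertices :: "'a set \<Rightarrow> 'a set \<Rightarrow> ('a + 'a) set" where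
  "dup_vertices V S = Inl ` V \<union> Inr ` S"

fun dup_edge :: "'a set \<Rightarrow> ('a \<Rightarrow> 'a \<Rightarrow> bool) \<Rightarrow> 'a set \<Rightarrow> 'a + 'a \<Rightarrow> 'a + 'a \<Rightarrow> bool" where
  "dup_edge V E S (Inl a) (Inl b) = E a b"
| "dup_edge V E S (Inr a) (Inr b) = (a \<in> S \<and> b \<in> S \<and> E a b)"
| "dup_edge V E S (Inr a) (Inl p) = (a \<in> S \<and> p \<in> V \<and> p \<notin> S \<and> E a p)"
| "dup_edge V E S (Inl p) (Inr a) = (a \<in> S \<and> p \<in> V \<and> p \<notin> S \<and> E a p)"

end

theory Submission
  imports Defs
begin

text \<open>The eigenfunction is odd under the swap \<open>p\<^sub>\<alpha> \<leftrightarrow> q\<^sub>\<alpha>\<close>. Since no \<open>q\<^sub>\<beta>\<close> is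
  adjacent to a vertex of \<open>\<Sigma>\<close>, each \<open>p\<^sub>\<alpha>\<close> keeps its neighbourhood from \<open>\<Gamma>\<close>; and \<open>q\<^sub>\<alpha>\<close>
  has the neighbourhood of \<open>p\<^sub>\<alpha>\<close> with the vertices of \<open>\<Sigma>\<close> replaced by their copies.
  So both have degree \<open>n\<^sub>\<alpha>\<close> and see the neighbour sum \<open>\<Sum> f(j)\<close> over \<open>j \<in> \<Sigma>, j \<sim> p\<^sub>\<alpha>\<close>
  with signs \<open>+\<close> and \<open>-\<close> respectively. At a vertex outside \<open>\<Sigma>\<close> the contributions of
  \<open>p\<^sub>\<alpha>\<close> and \<open>q\<^sub>\<alpha>\<close> cancel, matching the value 0 there.\<close>

definition odd_lift :: "'a set \<Rightarrow> ('a \<Rightarrow> real) \<Rightarrow> 'a + 'a \<Rightarrow> real" where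
  "odd_lift S f x = (case x of Inl p \<Rightarrow> (if p \<in> S then f p else 0) | Inr p \<Rightarrow> - f p)"

lemma neighbors_dup_Inl:
  assumes "p \<in> V"
  shows "neighbors (dup_vertices V S) (dup_edge V E S) (Inl p) =
    Inl ` {b \<in> V. E p b} \<union> Inr ` {a \<in> S. p \<notin> S \<and> E a p}"
  using assms unfolding neighbors_def dup_vertices_def
  by (auto elim: dup_edge.elims)

lemma neighbors_dup_Inr:
  assumes "p \<in> S"
  shows "neighbors (dup_vertices V S) (dup_edge V E S) (Inr p) =
    Inr ` {b \<in> S. E p b} \<union> Inl ` {q \<in> V. q \<notin> S \<and> E p q}"
  using assms unfolding neighbors_def dup_vertices_def
  by (auto elim: dup_edge.elims)

lemma degree_dup_Inl:
  assumes "p \<in> S" "S \<subseteq> V"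
  shows "degree (dup_vertices V S) (dup_edge V E S) (Inl p) = degree V E p"
proof -
  have "neighbors (dup_vertices V S) (dup_edge V E S) (Inl p) = Inl ` neighbors V E p"
    unfolding neighbors_dup_Inl[OF subsetD[OF assms(2,1)]] using assms(1) by (simp add: neighbors_def)
  then show ?thesis
    by (simp add: degree_def card_image)
qed

lemma degree_dup_Inr:
  assumes "finite V" "p \<in> S" "S \<subseteq> V"
  shows "degree (dup_vertices V S) (dup_edge V E S) (Inr p) = degree V E p"
proof -
  have fin: "finite {b \<in> S. E p b}" "finite {q \<in> V. q \<notin> S \<and> E p q}"
    using assms finite_subset[OF assms(3,1)] by auto
  have "card (neighbors (dup_vertices V S) (dup_edge V E S) (Inr p))
      = card {b \<in> S. E p b} + card {q \<in> V. q \<notin> S \<and> E p q}"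
    unfolding neighbors_dup_Inr[OF assms(2)]
    by (subst card_Un_disjoint) (use fin in \<open>auto simp: card_image\<close>)
  also have "\<dots> = card ({b \<in> S. E p b} \<union> {q \<in> V. q \<notin> S \<and> E p q})"
    by (subst card_Un_disjoint) (use fin in auto)
  also have "{b \<in> S. E p b} \<union> {q \<in> V. q \<notin> S \<and> E p q} = neighbors V E p"
    using assms(3) by (auto simp: neighbors_def)
  finally show ?thesis
    by (simp add: degree_def)
qed

lemma sum_odd_lift_neighbors_dup_Inl:
  assumes "simple_graph V E" "S \<subseteq> V" "p \<in> V"
  shows "(\<Sum>j\<in>neighbors (dup_vertices V S) (dup_edge V E S) (Inl p). odd_lift S f j)
    = (if p \<in> S then (\<Sum>b\<in>{b \<in> S. E p b}. f b) else 0)"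
proof -
  have fin: "finite V" and sym: "\<And>x y. E x y \<Longrightarrow> E y x"
    using assms(1) by (auto simp: simple_graph_def)
  have fin': "finite {b \<in> V. E p b}" "finite {a \<in> S. p \<notin> S \<and> E a p}"
    using fin finite_subset[OF assms(2) fin] by auto
  have "(\<Sum>j\<in>neighbors (dup_vertices V S) (dup_edge V E S) (Inl p). odd_lift S f j)
      = (\<Sum>b\<in>{b \<in> V. E p b}. odd_lift S f (Inl b)) + (\<Sum>a\<in>{a \<in> S. p \<notin> S \<and> E a p}. odd_lift S f (Inr a))"
    unfolding neighbors_dup_Inl[OF assms(3)]
    by (subst sum.union_disjoint) (use fin' in \<open>auto simp: sum.reindex\<close>)
  also have "(\<Sum>b\<in>{b \<in> V. E p b}. odd_lift S f (Inl b)) = (\<Sum>b\<in>{b \<in> V. E p b} \<inter> S. f b)"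
    using fin'(1) by (simp add: odd_lift_def sum.inter_restrict[symmetric] if_distrib)
  also have "{b \<in> V. E p b} \<inter> S = {b \<in> S. E p b}"
    using assms(2) by auto
  also have "{a \<in> S. p \<notin> S \<and> E a p} = (if p \<in> S then {} else {b \<in> S. E p b})"
    using sym by auto
  finally show ?thesis
    by (simp add: odd_lift_def sum_negf)
qed

lemma sum_odd_lift_neighbors_dup_Inr:
  assumes "finite V" "S \<subseteq> V" "p \<in> S"
  shows "(\<Sum>j\<in>neighbors (dup_vertices V S) (dup_edge V E S) (Inr p). odd_lift S f j)
    = - (\<Sum>b\<in>{b \<in> S. E p b}. f b)"
proof -
  have fin: "finite {b \<in> S. E p b}" "finite {q \<in> V. q \<notin> S \<and> E p q}"
    using assms finite_subset[OF assms(2,1)] by auto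
  have "(\<Sum>j\<in>neighbors (dup_vertices V S) (dup_edge V E S) (Inr p). odd_lift S f j)
      = (\<Sum>b\<in>{b \<in> S. E p b}. odd_lift S f (Inr b)) + (\<Sum>a\<in>{q \<in> V. q \<notin> S \<and> E p q}. odd_lift S f (Inl a))"
    unfolding neighbors_dup_Inr[OF assms(3)]
    by (subst sum.union_disjoint) (use fin in \<open>auto simp: sum.reindex\<close>)
  then show ?thesis
    by (simp add: odd_lift_def sum_negf)
qed

lemma nl_eigenfunction_dup_odd_lift:
  assumes "simple_graph V E" "S \<subseteq> V"
    and nonzero: "\<exists>i\<in>S. f i \<noteq> 0"
    and eigen: "\<forall>i\<in>S. (1 / real (degree V E i)) * (\<Sum>j\<in>{j \<in> S. E i j}. f j) = (1 - lam) * f i"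
  shows "nl_eigenfunction (dup_vertices V S) (dup_edge V E S) lam (odd_lift S f)"
  unfolding nl_eigenfunction_def
proof (intro conjI ballI)
  have fin: "finite V"
    using assms(1) by (simp add: simple_graph_def)
  obtain i where "i \<in> S" "f i \<noteq> 0"
    using nonzero by blast
  then show "\<exists>x\<in>dup_vertices V S. odd_lift S f x \<noteq> 0"
    by (intro bexI[of _ "Inr i"]) (auto simp: odd_lift_def dup_vertices_def)
  fix x assume "x \<in> dup_vertices V S"
  then consider p where "x = Inl p" "p \<in> S" | p where "x = Inl p" "p \<in> V" "p \<notin> S"
    | p where "x = Inr p" "p \<in> S"
    unfolding dup_vertices_def by blast
  then show "1 / real (degree (dup_vertices V S) (dup_edge V E S) x) *
      (\<Sum>j\<in>neighbors (dup_vertices V S) (dup_edge V E S) x. odd_lift S f j) = (1 - lam) * odd_lift S f x"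
  proof cases
    case 1
    then have "p \<in> V"
      using assms(2) by blast
    with 1 show ?thesis
      using assms eigen by (simp add: degree_dup_Inl sum_odd_lift_neighbors_dup_Inl) (simp add: odd_lift_def)
  next
    case 2
    then show ?thesis
      using assms by (simp add: sum_odd_lift_neighbors_dup_Inl) (simp add: odd_lift_def)
  next
    case 3
    then show ?thesis
      using assms fin eigen by (simp add: degree_dup_Inr sum_odd_lift_neighbors_dup_Inr) (simp add: odd_lift_def)
  qed
qed

theorem theorem3:
  fixes V S :: "'a set" and E :: "'a \<Rightarrow> 'a \<Rightarrow> bool" and f :: "'a \<Rightarrow> real" and lam :: real
  assumes "simple_graph V E" and "no_isolated V E" and "connected_graph V E"
    and "motif V E S"
    and "\<exists>i\<in>S. f i \<noteq> 0"
    and "\<forall>i\<in>S. (1 / real (degree V E i)) * (\<Sum>j\<in>{j \<in> S. E i j}. f j) = (1 - lam) * f i"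
  shows "nl_eigenvalue (dup_vertices V S) (dup_edge V E S) lam \<and>
    nl_eigenfunction (dup_vertices V S) (dup_edge V E S) lam
      (\<lambda>x. case x of Inl p \<Rightarrow> (if p \<in> S then f p else 0) | Inr p \<Rightarrow> - f p)"
proof -
  have "S \<subseteq> V"
    using assms(4) by (simp add: motif_def)
  with assms(1) have "nl_eigenfunction (dup_vertices V S) (dup_edge V E S) lam (odd_lift S f)"
    using assms(5,6) by (rule nl_eigenfunction_dup_odd_lift)
  then show ?thesis
    unfolding nl_eigenvalue_def odd_lift_def[abs_def] by blast
qed

end
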